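(* Under the hypotheses of Theorem 1 (stated in the context), with probability one there exist $n_0\in\mathbb N$ and $\varepsilon>0$ such that for every $n\ge n_0$ and every $j=1,\dots,r-1$ the function $\hat f_n$ has exactly one local minimizer $\hat m_{n,j}$ in $[m_j-\varepsilon,m_j+\varepsilon]$, and $\hat f_n$ has no other local minimizer in $(a,b)$. Moreover, with probability one, $\hat m_{n,j}\to m_j$ as $n\to\infty$ for every $j=1,\dots,r-1$.
   Context: Hypotheses: $P$ is a probability distribution on $\mathbb R$ with density $f$, $f=0$ outside $[a,b]$ ($a<b$), $f|_{[a,b]}$ is three times continuously differentiable on $[a,b]$ (one-sided at endpoints), $f'(a)\ne0$, $f'(b)\ne0$, $f$ has finitely many critical points in $(a,b)$, all with $f''\neq0$; $m_1<\dots<m_{r-1}$ are the local minimizers of $f$ in $(a,b)$. $(\hat f_n)$ are random functions on a common probability space, each twice continuously differentiable on $[a,b]$, with $\sup_{[a,b]}|\hat f_n^{(j)}-f^{(j)}|\to0$ almost surely for $j=1,2$. *)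

theory Defs
  imports "HOL-Probability.Probability"
begin

definition local_minimizer_in :: "real \<Rightarrow> real \<Rightarrow> (real \<Rightarrow> real) \<Rightarrow> real \<Rightarrow> bool" where
  "local_minimizer_in a b g x \<longleftrightarrow>
     x \<in> {a<..<b} \<and> (\<exists>\<delta>>0. \<forall>y. \<bar>y - x\<bar> < \<delta> \<longrightarrow> g x \<le> g y)"

end

theory Submission imports Defs begin

(*
  The statement is deterministic at heart: for almost every outcome the estimates
  fh n converge to f in the C^1 and C^2 sense uniformly on [a,b], and the claim
  follows from a perturbation result about a single such convergent sequence.
*)

section \<open>Calculus on a window\<close>

text \<open>A positive (negative) derivative on an interval makes a function strictly
  increasing (decreasing); derivatives are only required at the points of a closed
  interval, which is how they arise below.\<close>

lemma deriv_pos_imp_less: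
  fixes g g' :: "real \<Rightarrow> real"
  assumes deriv: "\<forall>z\<in>{s..t}. DERIV g z :> g' z" and pos: "\<forall>z\<in>{s<..<t}. 0 < g' z"
    and "s < t"
  shows "g s < g t"
proof (rule DERIV_pos_imp_increasing_open[OF \<open>s < t\<close>])
  show "continuous_on {s..t} g"
    using deriv by (meson DERIV_isCont continuous_at_imp_continuous_on)
  fix x assume "s < x" "x < t"
  then show "\<exists>l. DERIV g x :> l \<and> 0 < l" using deriv pos by (intro exI[of _ "g' x"]) auto
qed

lemma deriv_neg_imp_greater:
  fixes g g' :: "real \<Rightarrow> real"
  assumes deriv: "\<forall>z\<in>{s..t}. DERIV g z :> g' z" and neg: "\<forall>z\<in>{s<..<t}. g' z < 0"
    and "s < t"
  shows "g t < g s"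
proof (rule DERIV_neg_imp_decreasing_open[OF \<open>s < t\<close>])
  show "continuous_on {s..t} g"
    using deriv by (meson DERIV_isCont continuous_at_imp_continuous_on)
  fix x assume "s < x" "x < t"
  then show "\<exists>l. DERIV g x :> l \<and> l < 0" using deriv neg by (intro exI[of _ "g' x"]) auto
qed

lemma deriv_ge_imp_increment_ge:
  fixes g g' :: "real \<Rightarrow> real"
  assumes deriv: "\<forall>z\<in>{x..y}. DERIV g z :> g' z" and bound: "\<forall>z\<in>{x..y}. k \<le> g' z"
    and "x \<le> y"
  shows "k * (y - x) \<le> g y - g x"
proof -
  have "g x - k * x \<le> g y - k * y"
  proof (rule DERIV_nonneg_imp_nondecreasing[OF \<open>x \<le> y\<close>])
    fix z assume "x \<le> z" "z \<le> y"
    then have "DERIV (\<lambda>z. g z - k * z) z :> g' z - k"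
      using deriv by (auto intro!: derivative_eq_intros)
    then show "\<exists>l. DERIV (\<lambda>z. g z - k * z) z :> l \<and> 0 \<le> l"
      using bound \<open>x \<le> z\<close> \<open>z \<le> y\<close> by auto
  qed
  then show ?thesis by (simp add: algebra_simps)
qed

lemma local_minimizer_deriv_zero:
  assumes "local_minimizer_in a b g x" and "DERIV g x :> l"
  shows "l = 0"
proof -
  obtain d where "0 < d" "\<forall>y. \<bar>y - x\<bar> < d \<longrightarrow> g x \<le> g y"
    using assms(1) unfolding local_minimizer_in_def by auto
  then show ?thesis
    using DERIV_local_min[OF assms(2), of d] by (simp add: abs_minus_commute)
qed

lemma sign_change_imp_local_min:
  fixes g g' :: "real \<Rightarrow> real"
  assumes deriv: "\<forall>y\<in>{x-e..x+e}. DERIV g y :> g' y"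
    and left: "\<forall>y\<in>{x-e..<x}. g' y < 0" and right: "\<forall>y\<in>{x<..x+e}. 0 < g' y"
  shows "\<forall>y. \<bar>y - x\<bar> < e \<longrightarrow> g x \<le> g y"
proof (intro allI impI)
  fix y assume y: "\<bar>y - x\<bar> < e"
  consider "y < x" | "y = x" | "x < y" by linarith
  then show "g x \<le> g y"
  proof cases
    case 1
    have "g x < g y"
      by (rule deriv_neg_imp_greater[OF _ _ 1, of g g']) (use deriv left y 1 in auto)
    then show ?thesis by simp
  next
    case 3
    have "g x < g y"
      by (rule deriv_pos_imp_less[OF _ _ 3, of g g']) (use deriv right y 3 in auto)
    then show ?thesis by simp
  qed simp
qed

text \<open>On a convex window inside (a,b) across which g' changes sign, g has exactly
  one local minimizer, namely the unique zero of the strictly increasing g'.\<close>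

lemma convex_window_unique_local_min:
  fixes g g' g'' :: "real \<Rightarrow> real"
  assumes "0 < e" and window: "{c-e..c+e} \<subseteq> {a<..<b}"
    and deriv: "\<forall>y\<in>{c-e..c+e}. DERIV g y :> g' y"
    and deriv': "\<forall>y\<in>{c-e..c+e}. DERIV g' y :> g'' y"
    and convex: "\<forall>y\<in>{c-e..c+e}. 0 < g'' y"
    and left: "g' (c-e) < 0" and right: "0 < g' (c+e)"
  shows "\<exists>!x. x \<in> {c-e..c+e} \<and> local_minimizer_in a b g x"
proof -
  have mono: "g' s < g' t" if "c-e \<le> s" "s < t" "t \<le> c+e" for s t
    by (rule deriv_pos_imp_less[OF _ _ \<open>s < t\<close>, of g' g'']) (use deriv' convex that in auto)
  have "continuous_on {c-e..c+e} g'"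
    using deriv' by (meson DERIV_isCont continuous_at_imp_continuous_on)
  then obtain x0 where x0: "c-e \<le> x0" "x0 \<le> c+e" "g' x0 = 0"
    using IVT'[of g' "c-e" 0 "c+e"] left right \<open>0 < e\<close> by auto
  have x0_inner: "c-e < x0" "x0 < c+e"
    using x0 left right by (auto simp: order_le_less)
  define d where "d = min (x0 - (c-e)) (c+e - x0)"
  have "0 < d" using x0_inner by (simp add: d_def)
  have "\<forall>y. \<bar>y - x0\<bar> < d \<longrightarrow> g x0 \<le> g y"
  proof (rule sign_change_imp_local_min)
    show "\<forall>y\<in>{x0-d..x0+d}. DERIV g y :> g' y"
    proof
      fix y assume "y \<in> {x0-d..x0+d}"
      then have "y \<in> {c-e..c+e}" by (auto simp: d_def)
      then show "DERIV g y :> g' y" using deriv by blast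
    qed
    show "\<forall>y\<in>{x0-d..<x0}. g' y < 0" using mono[of _ x0] x0 by (auto simp: d_def)
    show "\<forall>y\<in>{x0<..x0+d}. 0 < g' y" using mono[of x0] x0 by (auto simp: d_def)
  qed
  then have x0_min: "local_minimizer_in a b g x0"
    unfolding local_minimizer_in_def using \<open>0 < d\<close> x0 window by auto
  show ?thesis
  proof (rule ex1I[of _ x0])
    show "x0 \<in> {c-e..c+e} \<and> local_minimizer_in a b g x0" using x0_min x0 by auto
    fix y assume y: "y \<in> {c-e..c+e} \<and> local_minimizer_in a b g y"
    then have "g' y = 0" using local_minimizer_deriv_zero[of a b g y] deriv by auto
    then show "y = x0"
      using mono[of y x0] mono[of x0 y] x0 y by (cases y x0 rule: linorder_cases) auto
  qed
qed

text \<open>A concave window contains no local minimizer in its interior: at a critical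
  point the strictly decreasing g' is negative to the right, so g decreases there.\<close>

lemma concave_window_no_local_min:
  fixes g g' g'' :: "real \<Rightarrow> real"
  assumes deriv: "\<forall>y\<in>{c-e..c+e}. DERIV g y :> g' y"
    and deriv': "\<forall>y\<in>{c-e..c+e}. DERIV g' y :> g'' y"
    and concave: "\<forall>y\<in>{c-e..c+e}. g'' y < 0" and x: "x \<in> {c-e<..<c+e}"
  shows "\<not> local_minimizer_in a b g x"
proof
  assume x_min: "local_minimizer_in a b g x"
  then obtain d where d: "0 < d" "\<forall>y. \<bar>y - x\<bar> < d \<longrightarrow> g x \<le> g y"
    unfolding local_minimizer_in_def by auto
  have "g' x = 0" using local_minimizer_deriv_zero[OF x_min] deriv x by auto
  have g'_neg: "g' y < 0" if "x < y" "y \<le> c+e" for y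
    using deriv_neg_imp_greater[OF _ _ \<open>x < y\<close>, of g' g''] deriv' concave x that \<open>g' x = 0\<close>
    by auto
  define y where "y = x + min d (c+e - x) / 2"
  have y: "x < y" "y \<le> c+e" "\<bar>y - x\<bar> < d" using d x by (auto simp: y_def min_def field_simps)
  have "g y < g x"
    by (rule deriv_neg_imp_greater[OF _ _ \<open>x < y\<close>, of g g']) (use deriv g'_neg x y in auto)
  with d y show False by (meson not_le)
qed


section \<open>Nondegenerate profiles\<close>

locale nondegenerate_profile =
  fixes a b :: real and f f1 f2 :: "real \<Rightarrow> real"
  assumes f_deriv: "\<forall>x\<in>{a<..<b}. DERIV f x :> f1 x"
    and f1_deriv: "\<forall>x\<in>{a<..<b}. DERIV f1 x :> f2 x"
    and f1_cont: "continuous_on {a..b} f1"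
    and f2_cont: "continuous_on {a..b} f2"
    and f1_a: "f1 a \<noteq> 0" and f1_b: "f1 b \<noteq> 0"
    and crit_finite: "finite {x\<in>{a<..<b}. f1 x = 0}"
    and crit_nondeg: "\<forall>x\<in>{a<..<b}. f1 x = 0 \<longrightarrow> f2 x \<noteq> 0"
begin

definition crit :: "real set" where
  "crit = {x\<in>{a<..<b}. f1 x = 0}"

definition window_radius :: "real \<Rightarrow> bool" where
  "window_radius \<epsilon> \<longleftrightarrow> 0 < \<epsilon> \<and> (\<forall>c\<in>crit. {c-\<epsilon>..c+\<epsilon>} \<subseteq> {a<..<b} \<and>
     (0 < f2 c \<longrightarrow> (\<forall>y\<in>{c-\<epsilon>..c+\<epsilon>}. \<epsilon> \<le> f2 y)) \<and>
     (f2 c < 0 \<longrightarrow> (\<forall>y\<in>{c-\<epsilon>..c+\<epsilon>}. f2 y \<le> -\<epsilon>)))"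

lemma window_radius_pos: "window_radius \<epsilon> \<Longrightarrow> 0 < \<epsilon>"
  by (simp add: window_radius_def)

lemma window_subset: "window_radius \<epsilon> \<Longrightarrow> c \<in> crit \<Longrightarrow> {c-\<epsilon>..c+\<epsilon>} \<subseteq> {a<..<b}"
  by (simp add: window_radius_def)

text \<open>Each critical point admits all sufficiently small radii, by continuity of f''
  and f''(c) \<noteq> 0; as there are finitely many, a common radius exists.\<close>

lemma window_radius_exists: "\<exists>\<epsilon>. window_radius \<epsilon>"
proof -
  define P where "P e c \<longleftrightarrow> {c-e..c+e} \<subseteq> {a<..<b} \<and> e \<le> \<bar>f2 c\<bar> / 2 \<and>
    (\<forall>y\<in>{c-e..c+e}. \<bar>f2 y - f2 c\<bar> < \<bar>f2 c\<bar> / 2)" for e c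
  have "\<forall>c\<in>crit. eventually (\<lambda>e. P e c) (at_right 0)"
  proof
    fix c assume c: "c \<in> crit"
    then have c_inner: "a < c" "c < b" and f2c: "0 < \<bar>f2 c\<bar> / 2"
      using crit_nondeg by (auto simp: crit_def)
    have "isCont f2 c"
      using continuous_on_interior[OF f2_cont] c_inner by auto
    then obtain d where d: "0 < d" "\<forall>y. dist y c < d \<longrightarrow> dist (f2 y) (f2 c) < \<bar>f2 c\<bar> / 2"
      using f2c unfolding continuous_at_eps_delta by blast
    show "eventually (\<lambda>e. P e c) (at_right 0)"
      unfolding eventually_at_right_field
    proof (intro exI[of _ "min d (min (c-a) (min (b-c) (\<bar>f2 c\<bar> / 2)))"] conjI allI impI)
      fix e :: real assume e: "0 < e" "e < min d (min (c-a) (min (b-c) (\<bar>f2 c\<bar> / 2)))"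
      have "\<bar>f2 y - f2 c\<bar> < \<bar>f2 c\<bar> / 2" if "y \<in> {c-e..c+e}" for y
        using d that e by (auto simp: dist_real_def)
      then show "P e c" using e by (auto simp: P_def)
    qed (use d c_inner f2c in auto)
  qed
  then have "eventually (\<lambda>e. \<forall>c\<in>crit. P e c) (at_right 0)"
    by (rule eventually_ball_finite[OF crit_finite[folded crit_def]])
  moreover have "eventually (\<lambda>e. 0 < e) (at_right (0::real))"
    by (rule eventually_at_right_less)
  ultimately have "eventually (\<lambda>e. 0 < e \<and> (\<forall>c\<in>crit. P e c)) (at_right 0)"
    by (simp add: eventually_conj_iff)
  then have "\<exists>e. 0 < e \<and> (\<forall>c\<in>crit. P e c)"
    by (rule eventually_happens'[rotated]) simp
  then obtain \<epsilon> where \<epsilon>: "0 < \<epsilon>" "\<forall>c\<in>crit. P \<epsilon> c" by blast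
  have "window_radius \<epsilon>"
    unfolding window_radius_def
  proof (intro conjI ballI impI \<open>0 < \<epsilon>\<close>)
    fix c y assume c: "c \<in> crit" and y: "y \<in> {c-\<epsilon>..c+\<epsilon>}"
    then have near: "\<bar>f2 y - f2 c\<bar> < \<bar>f2 c\<bar> / 2" and small: "\<epsilon> \<le> \<bar>f2 c\<bar> / 2"
      using \<epsilon>(2) by (auto simp: P_def)
    show "\<epsilon> \<le> f2 y" if "0 < f2 c" using near small that by (auto simp: abs_if split: if_splits)
    show "f2 y \<le> -\<epsilon>" if "f2 c < 0" using near small that by (auto simp: abs_if split: if_splits)
  qed (use \<epsilon>(2) in \<open>auto simp: P_def\<close>)
  then show ?thesis ..
qed

lemma f1_linear_growth:
  assumes \<epsilon>: "window_radius \<epsilon>" and c: "c \<in> crit" "0 < f2 c" and y: "y \<in> {c-\<epsilon>..c+\<epsilon>}"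
  shows "y \<le> c \<Longrightarrow> f1 y \<le> \<epsilon> * (y - c)" and "c \<le> y \<Longrightarrow> \<epsilon> * (y - c) \<le> f1 y"
proof -
  have deriv: "\<forall>z\<in>{c-\<epsilon>..c+\<epsilon>}. DERIV f1 z :> f2 z"
    using window_subset[OF \<epsilon> c(1)] f1_deriv by blast
  have bound: "\<forall>z\<in>{c-\<epsilon>..c+\<epsilon>}. \<epsilon> \<le> f2 z"
    using \<epsilon> c unfolding window_radius_def by blast
  have "f1 c = 0" using c by (simp add: crit_def)
  show "f1 y \<le> \<epsilon> * (y - c)" if "y \<le> c"
    using deriv_ge_imp_increment_ge[of y c f1 f2 \<epsilon>] deriv bound y that \<open>f1 c = 0\<close>
    by (auto simp: algebra_simps)
  show "\<epsilon> * (y - c) \<le> f1 y" if "c \<le> y"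
    using deriv_ge_imp_increment_ge[of c y f1 f2 \<epsilon>] deriv bound y that \<open>f1 c = 0\<close>
    by auto
qed

lemma f1_abs_growth:
  assumes "window_radius \<epsilon>" "c \<in> crit" "0 < f2 c" "y \<in> {c-\<epsilon>..c+\<epsilon>}"
  shows "\<epsilon> * \<bar>y - c\<bar> \<le> \<bar>f1 y\<bar>"
  using f1_linear_growth[OF assms] window_radius_pos[OF assms(1)]
  by (cases "y \<le> c") (auto simp: abs_if algebra_simps)

lemma local_minimizer_iff:
  assumes \<epsilon>: "window_radius \<epsilon>"
  shows "local_minimizer_in a b f x \<longleftrightarrow> x \<in> crit \<and> 0 < f2 x"
proof
  assume x_min: "local_minimizer_in a b f x"
  then have x_inner: "x \<in> {a<..<b}" by (simp add: local_minimizer_in_def)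
  have "f1 x = 0" using local_minimizer_deriv_zero[OF x_min] f_deriv x_inner by auto
  then have x: "x \<in> crit" using x_inner by (simp add: crit_def)
  have "\<not> f2 x < 0"
  proof
    assume "f2 x < 0"
    then have "\<forall>y\<in>{x-\<epsilon>..x+\<epsilon>}. f2 y < 0"
      using \<epsilon> x window_radius_pos[OF \<epsilon>] unfolding window_radius_def by force
    moreover have "\<forall>y\<in>{x-\<epsilon>..x+\<epsilon>}. DERIV f y :> f1 y" "\<forall>y\<in>{x-\<epsilon>..x+\<epsilon>}. DERIV f1 y :> f2 y"
      using window_subset[OF \<epsilon> x] f_deriv f1_deriv by blast+
    ultimately show False
      using concave_window_no_local_min[of x \<epsilon> f f1 f2 x a b] x_min window_radius_pos[OF \<epsilon>]
      by auto
  qed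
  then show "x \<in> crit \<and> 0 < f2 x" using x crit_nondeg x_inner \<open>f1 x = 0\<close> by force
next
  assume x: "x \<in> crit \<and> 0 < f2 x"
  have "\<forall>y. \<bar>y - x\<bar> < \<epsilon> \<longrightarrow> f x \<le> f y"
  proof (rule sign_change_imp_local_min)
    show "\<forall>y\<in>{x-\<epsilon>..x+\<epsilon>}. DERIV f y :> f1 y"
      using window_subset[OF \<epsilon>] x f_deriv by blast
    show "\<forall>y\<in>{x-\<epsilon>..<x}. f1 y < 0"
    proof
      fix y assume y: "y \<in> {x-\<epsilon>..<x}"
      have "f1 y \<le> \<epsilon> * (y - x)" using f1_linear_growth(1)[OF \<epsilon>] x y by auto
      also have "\<dots> < 0" using y window_radius_pos[OF \<epsilon>] by (simp add: mult_pos_neg)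
      finally show "f1 y < 0" .
    qed
    show "\<forall>y\<in>{x<..x+\<epsilon>}. 0 < f1 y"
    proof
      fix y assume y: "y \<in> {x<..x+\<epsilon>}"
      have "0 < \<epsilon> * (y - x)" using y window_radius_pos[OF \<epsilon>] by simp
      also have "\<dots> \<le> f1 y" using f1_linear_growth(2)[OF \<epsilon>] x y by auto
      finally show "0 < f1 y" .
    qed
  qed
  then show "local_minimizer_in a b f x"
    using x window_radius_pos[OF \<epsilon>] by (auto simp: local_minimizer_in_def crit_def)
qed

text \<open>Off the open windows f' has no zero in the compact set that remains of [a,b],
  so |f'| is bounded below there by a positive constant.\<close>

lemma f1_bounded_away_off_windows:
  assumes \<epsilon>: "window_radius \<epsilon>"
  obtains \<eta> where "0 < \<eta>" "\<forall>x\<in>{a..b}. (\<forall>c\<in>crit. \<epsilon> \<le> \<bar>x - c\<bar>) \<longrightarrow> \<eta> \<le> \<bar>f1 x\<bar>"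
proof -
  define K where "K = {a..b} - (\<Union>c\<in>crit. {c-\<epsilon><..<c+\<epsilon>})"
  have K: "x \<in> K \<longleftrightarrow> x \<in> {a..b} \<and> (\<forall>c\<in>crit. \<epsilon> \<le> \<bar>x - c\<bar>)" for x
    by (auto simp: K_def abs_if)
  have "compact K"
  proof -
    have "K = {a..b} \<inter> - (\<Union>c\<in>crit. {c-\<epsilon><..<c+\<epsilon>})" by (auto simp: K_def)
    moreover have "closed (- (\<Union>c\<in>crit. {c-\<epsilon><..<c+\<epsilon>}))" by (intro closed_Compl open_UN) auto
    ultimately show ?thesis by (simp add: compact_Int_closed)
  qed
  have f1_K: "f1 x \<noteq> 0" if "x \<in> K" for x
  proof
    assume "f1 x = 0"
    then have "x \<in> crit" using that f1_a f1_b by (auto simp: K_def crit_def order_le_less)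
    then show False using that window_radius_pos[OF \<epsilon>] by (auto simp: K)
  qed
  show ?thesis
  proof (cases "K = {}")
    case True
    then have "\<forall>x\<in>{a..b}. (\<forall>c\<in>crit. \<epsilon> \<le> \<bar>x - c\<bar>) \<longrightarrow> 1 \<le> \<bar>f1 x\<bar>"
      using K by blast
    then show ?thesis using that[of 1] by simp
  next
    case False
    have "continuous_on K (\<lambda>x. \<bar>f1 x\<bar>)"
      by (rule continuous_on_rabs, rule continuous_on_subset[OF f1_cont]) (auto simp: K_def)
    then obtain x0 where "x0 \<in> K" "\<forall>y\<in>K. \<bar>f1 x0\<bar> \<le> \<bar>f1 y\<bar>"
      using continuous_attains_inf[OF \<open>compact K\<close> False] by blast
    then show ?thesis using that[of "\<bar>f1 x0\<bar>"] f1_K K by auto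
  qed
qed


section \<open>Perturbations of a nondegenerate profile\<close>

text \<open>If g' is eps^2-close and g'' is eps-close to f' and f'' on the window around a
  minimum c of f, then g is convex there and g' changes sign across it, so g has a
  unique local minimizer in the window.\<close>

lemma perturbed_unique_minimizer:
  fixes g g1 g2 :: "real \<Rightarrow> real"
  assumes \<epsilon>: "window_radius \<epsilon>" and c: "c \<in> crit" "0 < f2 c"
    and g_deriv: "\<forall>x\<in>{a<..<b}. DERIV g x :> g1 x"
    and g1_deriv: "\<forall>x\<in>{a<..<b}. DERIV g1 x :> g2 x"
    and close: "\<forall>x\<in>{c-\<epsilon>..c+\<epsilon>}. \<bar>g1 x - f1 x\<bar> < \<epsilon> * \<epsilon> \<and> \<bar>g2 x - f2 x\<bar> < \<epsilon>"
  shows "\<exists>!x. x \<in> {c-\<epsilon>..c+\<epsilon>} \<and> local_minimizer_in a b g x"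
proof (rule convex_window_unique_local_min[OF window_radius_pos[OF \<epsilon>] window_subset[OF \<epsilon> c(1)]])
  have W: "{c-\<epsilon>..c+\<epsilon>} \<subseteq> {a<..<b}" using window_subset[OF \<epsilon> c(1)] .
  show "\<forall>y\<in>{c-\<epsilon>..c+\<epsilon>}. DERIV g y :> g1 y" using W g_deriv by blast
  show "\<forall>y\<in>{c-\<epsilon>..c+\<epsilon>}. DERIV g1 y :> g2 y" using W g1_deriv by blast
  have "\<forall>y\<in>{c-\<epsilon>..c+\<epsilon>}. \<epsilon> \<le> f2 y" using \<epsilon> c unfolding window_radius_def by blast
  then show "\<forall>y\<in>{c-\<epsilon>..c+\<epsilon>}. 0 < g2 y" using close by force
  have ends: "c-\<epsilon> \<in> {c-\<epsilon>..c+\<epsilon>}" "c+\<epsilon> \<in> {c-\<epsilon>..c+\<epsilon>}"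
    using window_radius_pos[OF \<epsilon>] by auto
  have "\<bar>g1 (c-\<epsilon>) - f1 (c-\<epsilon>)\<bar> < \<epsilon> * \<epsilon>" "\<bar>g1 (c+\<epsilon>) - f1 (c+\<epsilon>)\<bar> < \<epsilon> * \<epsilon>"
    using close ends by blast+
  moreover have "f1 (c-\<epsilon>) \<le> \<epsilon> * ((c-\<epsilon>) - c)" "\<epsilon> * ((c+\<epsilon>) - c) \<le> f1 (c+\<epsilon>)"
    using f1_linear_growth(1)[OF \<epsilon> c ends(1)] f1_linear_growth(2)[OF \<epsilon> c ends(2)]
      window_radius_pos[OF \<epsilon>] by simp_all
  ultimately show "g1 (c-\<epsilon>) < 0" "0 < g1 (c+\<epsilon>)" by (simp_all add: algebra_simps)
qed

text \<open>If moreover g' is closer to f' than the lower bound eta of |f'| off the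
  windows, every local minimizer of g lies in the window of a minimum of f: it is a
  zero of g', hence in some window, and windows of maxima of f are concave for g.\<close>

lemma perturbed_minimizer_localized:
  fixes g g1 g2 :: "real \<Rightarrow> real"
  assumes \<epsilon>: "window_radius \<epsilon>"
    and \<eta>: "\<forall>x\<in>{a..b}. (\<forall>c\<in>crit. \<epsilon> \<le> \<bar>x - c\<bar>) \<longrightarrow> \<eta> \<le> \<bar>f1 x\<bar>"
    and g_deriv: "\<forall>x\<in>{a<..<b}. DERIV g x :> g1 x"
    and g1_deriv: "\<forall>x\<in>{a<..<b}. DERIV g1 x :> g2 x"
    and close: "\<forall>x\<in>{a..b}. \<bar>g1 x - f1 x\<bar> < \<eta> \<and> \<bar>g2 x - f2 x\<bar> < \<epsilon>"
    and x_min: "local_minimizer_in a b g x"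
  shows "\<exists>c\<in>crit. 0 < f2 c \<and> x \<in> {c-\<epsilon>..c+\<epsilon>}"
proof -
  have x_inner: "x \<in> {a<..<b}" using x_min by (simp add: local_minimizer_in_def)
  then have x_ab: "x \<in> {a..b}" by simp
  have "g1 x = 0" using local_minimizer_deriv_zero[OF x_min] g_deriv x_inner by auto
  then have "\<bar>f1 x\<bar> < \<eta>" using close[rule_format, OF x_ab] by simp
  then have "\<not> (\<forall>c\<in>crit. \<epsilon> \<le> \<bar>x - c\<bar>)" using \<eta> x_ab by auto
  then obtain c where "c \<in> crit" "\<bar>x - c\<bar> < \<epsilon>" by (meson not_le)
  then have c: "c \<in> crit" "x \<in> {c-\<epsilon><..<c+\<epsilon>}" by (simp_all add: abs_less_iff)
  have W: "{c-\<epsilon>..c+\<epsilon>} \<subseteq> {a<..<b}" using window_subset[OF \<epsilon> c(1)] .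
  have "\<not> f2 c < 0"
  proof
    assume "f2 c < 0"
    then have f2_neg: "\<forall>y\<in>{c-\<epsilon>..c+\<epsilon>}. f2 y \<le> -\<epsilon>"
      using \<epsilon> c(1) unfolding window_radius_def by blast
    have "g2 y < 0" if "y \<in> {c-\<epsilon>..c+\<epsilon>}" for y
    proof -
      have "y \<in> {a..b}" using W that by auto
      then show ?thesis using close f2_neg that by fastforce
    qed
    moreover have "\<forall>y\<in>{c-\<epsilon>..c+\<epsilon>}. DERIV g y :> g1 y" "\<forall>y\<in>{c-\<epsilon>..c+\<epsilon>}. DERIV g1 y :> g2 y"
      using W g_deriv g1_deriv by blast+
    ultimately show False
      using concave_window_no_local_min[of c \<epsilon> g g1 g2 x a b] c(2) x_min by blast
  qed
  moreover have "f2 c \<noteq> 0" using c(1) crit_nondeg by (simp add: crit_def)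
  ultimately show ?thesis using c by force
qed

text \<open>Critical points of a sequence g_n with g_n' \<rightarrow> f' uniformly, chosen in the
  window of a minimum c of f, converge to c, by the linear growth of f' there.\<close>

lemma critical_points_converge:
  fixes G1 :: "nat \<Rightarrow> real \<Rightarrow> real" and X :: "nat \<Rightarrow> real"
  assumes \<epsilon>: "window_radius \<epsilon>" and c: "c \<in> crit" "0 < f2 c"
    and U1: "uniform_limit {a..b} G1 f1 sequentially"
    and X: "\<forall>n\<ge>N. X n \<in> {c-\<epsilon>..c+\<epsilon>} \<and> G1 n (X n) = 0"
  shows "X \<longlonglongrightarrow> c"
  unfolding tendsto_iff
proof (intro allI impI)
  fix e :: real assume "0 < e"
  have "\<forall>\<^sub>F n in sequentially. \<forall>x\<in>{a..b}. dist (G1 n x) (f1 x) < \<epsilon> * e"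
    using U1 \<open>0 < e\<close> window_radius_pos[OF \<epsilon>] unfolding uniform_limit_iff by simp
  moreover have "\<forall>\<^sub>F n in sequentially. N \<le> n" by (simp add: eventually_ge_at_top)
  ultimately show "\<forall>\<^sub>F n in sequentially. dist (X n) c < e"
  proof eventually_elim
    case (elim n)
    have Xn: "X n \<in> {c-\<epsilon>..c+\<epsilon>}" "G1 n (X n) = 0" using X elim by auto
    have "X n \<in> {a..b}" using window_subset[OF \<epsilon> c(1)] Xn(1) by auto
    then have "\<bar>f1 (X n)\<bar> < \<epsilon> * e" using elim Xn(2) by (force simp: dist_real_def)
    moreover have "\<epsilon> * \<bar>X n - c\<bar> \<le> \<bar>f1 (X n)\<bar>" using f1_abs_growth[OF \<epsilon> c Xn(1)] .
    ultimately have "\<epsilon> * \<bar>X n - c\<bar> < \<epsilon> * e" by linarith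
    then show ?case using window_radius_pos[OF \<epsilon>] by (simp add: dist_real_def)
  qed
qed

theorem perturbed_local_minimizers:
  fixes G G1 G2 :: "nat \<Rightarrow> real \<Rightarrow> real"
  assumes G_deriv: "\<forall>n. \<forall>x\<in>{a<..<b}. DERIV (G n) x :> G1 n x"
    and G1_deriv: "\<forall>n. \<forall>x\<in>{a<..<b}. DERIV (G1 n) x :> G2 n x"
    and U1: "uniform_limit {a..b} G1 f1 sequentially"
    and U2: "uniform_limit {a..b} G2 f2 sequentially"
  defines "minima \<equiv> {x. local_minimizer_in a b f x}"
  shows "\<exists>n0 \<epsilon>. 0 < \<epsilon> \<and>
           (\<forall>n\<ge>n0.
              (\<forall>c\<in>minima. \<exists>!x. x \<in> {c-\<epsilon>..c+\<epsilon>} \<and> local_minimizer_in a b (G n) x) \<and>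
              (\<forall>x. local_minimizer_in a b (G n) x \<longrightarrow> (\<exists>c\<in>minima. x \<in> {c-\<epsilon>..c+\<epsilon>}))) \<and>
           (\<forall>c\<in>minima.
              (\<lambda>n. THE x. x \<in> {c-\<epsilon>..c+\<epsilon>} \<and> local_minimizer_in a b (G n) x) \<longlonglongrightarrow> c)"
proof -
  obtain \<epsilon> where \<epsilon>: "window_radius \<epsilon>" using window_radius_exists by blast
  obtain \<eta> where \<eta>: "0 < \<eta>" "\<forall>x\<in>{a..b}. (\<forall>c\<in>crit. \<epsilon> \<le> \<bar>x - c\<bar>) \<longrightarrow> \<eta> \<le> \<bar>f1 x\<bar>"
    using f1_bounded_away_off_windows[OF \<epsilon>] by blast
  have minima: "minima = {c\<in>crit. 0 < f2 c}"
    using local_minimizer_iff[OF \<epsilon>] by (auto simp: minima_def)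
  have \<epsilon>_pos: "0 < \<epsilon>" "0 < \<epsilon> * \<epsilon>" using window_radius_pos[OF \<epsilon>] by simp_all
  have "\<forall>\<^sub>F n in sequentially. \<forall>x\<in>{a..b}. \<bar>G1 n x - f1 x\<bar> < \<eta>"
    "\<forall>\<^sub>F n in sequentially. \<forall>x\<in>{a..b}. \<bar>G1 n x - f1 x\<bar> < \<epsilon> * \<epsilon>"
    "\<forall>\<^sub>F n in sequentially. \<forall>x\<in>{a..b}. \<bar>G2 n x - f2 x\<bar> < \<epsilon>"
    using uniform_limitD[OF U1 \<eta>(1)] uniform_limitD[OF U1 \<epsilon>_pos(2)] uniform_limitD[OF U2 \<epsilon>_pos(1)]
    by (simp_all add: dist_real_def)
  then have "\<forall>\<^sub>F n in sequentially. \<forall>x\<in>{a..b}. \<bar>G1 n x - f1 x\<bar> < \<eta> \<and>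
      \<bar>G1 n x - f1 x\<bar> < \<epsilon> * \<epsilon> \<and> \<bar>G2 n x - f2 x\<bar> < \<epsilon>"
    by eventually_elim blast
  then obtain N where N: "\<forall>n\<ge>N. \<forall>x\<in>{a..b}. \<bar>G1 n x - f1 x\<bar> < \<eta> \<and>
      \<bar>G1 n x - f1 x\<bar> < \<epsilon> * \<epsilon> \<and> \<bar>G2 n x - f2 x\<bar> < \<epsilon>"
    by (auto simp: eventually_sequentially)
  have unique: "\<exists>!x. x \<in> {c-\<epsilon>..c+\<epsilon>} \<and> local_minimizer_in a b (G n) x"
    if "n \<ge> N" "c \<in> minima" for n c
  proof (rule perturbed_unique_minimizer[OF \<epsilon>])
    show c: "c \<in> crit" "0 < f2 c" using that(2) minima by auto
    have "{c-\<epsilon>..c+\<epsilon>} \<subseteq> {a..b}" using window_subset[OF \<epsilon> c(1)] by (auto simp: subset_eq)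
    then show "\<forall>x\<in>{c-\<epsilon>..c+\<epsilon>}. \<bar>G1 n x - f1 x\<bar> < \<epsilon> * \<epsilon> \<and> \<bar>G2 n x - f2 x\<bar> < \<epsilon>"
      using N that(1) by blast
  qed (use G_deriv G1_deriv in auto)
  have localized: "\<exists>c\<in>minima. x \<in> {c-\<epsilon>..c+\<epsilon>}"
    if "n \<ge> N" "local_minimizer_in a b (G n) x" for n x
    using perturbed_minimizer_localized[OF \<epsilon> \<eta>(2), of "G n" "G1 n" "G2 n" x] that N minima
      G_deriv G1_deriv by auto
  have converges: "(\<lambda>n. THE x. x \<in> {c-\<epsilon>..c+\<epsilon>} \<and> local_minimizer_in a b (G n) x) \<longlonglongrightarrow> c"
    if c: "c \<in> minima" for c
  proof (rule critical_points_converge[OF \<epsilon> _ _ U1, of c N])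
    show "c \<in> crit" "0 < f2 c" using c minima by auto
    show "\<forall>n\<ge>N. (THE x. x \<in> {c-\<epsilon>..c+\<epsilon>} \<and> local_minimizer_in a b (G n) x) \<in> {c-\<epsilon>..c+\<epsilon>} \<and>
        G1 n (THE x. x \<in> {c-\<epsilon>..c+\<epsilon>} \<and> local_minimizer_in a b (G n) x) = 0"
    proof (intro allI impI)
      fix n assume "N \<le> n"
      define x where "x = (THE x. x \<in> {c-\<epsilon>..c+\<epsilon>} \<and> local_minimizer_in a b (G n) x)"
      have x: "x \<in> {c-\<epsilon>..c+\<epsilon>}" "local_minimizer_in a b (G n) x"
        using theI'[OF unique[OF \<open>N \<le> n\<close> c]] by (auto simp: x_def)
      have "G1 n x = 0"
        using local_minimizer_deriv_zero[OF x(2)] G_deriv x(2)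
        by (auto simp: local_minimizer_in_def)
      then show "x \<in> {c-\<epsilon>..c+\<epsilon>} \<and> G1 n x = 0" using x by simp
    qed
  qed
  show ?thesis
    using window_radius_pos[OF \<epsilon>] unique localized converges by blast
qed

end


section \<open>Almost sure consistency of estimated minima\<close>

theorem mainTheorem2:
  fixes M :: "'s measure"
    and a b :: real
    and f f1 f2 f3 :: "real \<Rightarrow> real"
    and r :: nat and m :: "nat \<Rightarrow> real"
    and fh fh1 fh2 :: "nat \<Rightarrow> 's \<Rightarrow> real \<Rightarrow> real"
  assumes M: "prob_space M"
    and ab: "a < b"
    and f_nonneg: "\<forall>x. 0 \<le> f x"
    and f_int: "(f has_integral 1) UNIV"
    and f_out: "\<forall>x. x \<notin> {a..b} \<longrightarrow> f x = 0"
    and d1: "\<forall>x\<in>{a..b}. (f has_real_derivative f1 x) (at x within {a..b})"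
    and d2: "\<forall>x\<in>{a..b}. (f1 has_real_derivative f2 x) (at x within {a..b})"
    and d3: "\<forall>x\<in>{a..b}. (f2 has_real_derivative f3 x) (at x within {a..b})"
    and c3: "continuous_on {a..b} f3"
    and fa: "f1 a \<noteq> 0" and fb: "f1 b \<noteq> 0"
    and crit_fin: "finite {x\<in>{a<..<b}. f1 x = 0}"
    and crit_nondeg: "\<forall>x\<in>{a<..<b}. f1 x = 0 \<longrightarrow> f2 x \<noteq> 0"
    and m_mono: "strict_mono_on {1..<r} m"
    and m_minima: "{x. local_minimizer_in a b f x} = m ` {1..<r}"
    and fh_meas: "\<forall>n x. (\<lambda>\<omega>. fh n \<omega> x) \<in> borel_measurable M"
    and dh1: "\<forall>n \<omega>. \<forall>x\<in>{a..b}. (fh n \<omega> has_real_derivative fh1 n \<omega> x) (at x within {a..b})"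
    and dh2: "\<forall>n \<omega>. \<forall>x\<in>{a..b}. (fh1 n \<omega> has_real_derivative fh2 n \<omega> x) (at x within {a..b})"
    and ch2: "\<forall>n \<omega>. continuous_on {a..b} (fh2 n \<omega>)"
    and unif1: "AE \<omega> in M. uniform_limit {a..b} (\<lambda>n. fh1 n \<omega>) f1 sequentially"
    and unif2: "AE \<omega> in M. uniform_limit {a..b} (\<lambda>n. fh2 n \<omega>) f2 sequentially"
  shows "AE \<omega> in M. \<exists>n0 \<epsilon>. \<epsilon> > 0 \<and>
           (\<forall>n\<ge>n0.
              (\<forall>j\<in>{1..<r}. \<exists>!x. x \<in> {m j - \<epsilon>..m j + \<epsilon>} \<and> local_minimizer_in a b (fh n \<omega>) x) \<and>
              (\<forall>x. local_minimizer_in a b (fh n \<omega>) x \<longrightarrow>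
                    (\<exists>j\<in>{1..<r}. x \<in> {m j - \<epsilon>..m j + \<epsilon>}))) \<and>
           (\<forall>j\<in>{1..<r}.
              (\<lambda>n. THE x. x \<in> {m j - \<epsilon>..m j + \<epsilon>} \<and> local_minimizer_in a b (fh n \<omega>) x)
                \<longlonglongrightarrow> m j)"
proof -
  have interior_deriv: "\<forall>x\<in>{a<..<b}. DERIV g x :> g' x"
    if "\<forall>x\<in>{a..b}. (g has_real_derivative g' x) (at x within {a..b})" for g g' :: "real \<Rightarrow> real"
  proof
    fix x assume "x \<in> {a<..<b}"
    then have "at x within {a..b} = at x" "x \<in> {a..b}" by (simp_all add: at_within_Icc_at)
    then show "DERIV g x :> g' x" using that by metis
  qed
  interpret nondegenerate_profile a b f f1 f2
  proof
    show "continuous_on {a..b} f1" "continuous_on {a..b} f2"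
      using DERIV_continuous_on d2 d3 by blast+
  qed (use interior_deriv d1 d2 fa fb crit_fin crit_nondeg in auto)
  show ?thesis
    using unif1 unif2
  proof eventually_elim
    case (elim \<omega>)
    have "\<forall>n. \<forall>x\<in>{a<..<b}. DERIV (fh n \<omega>) x :> fh1 n \<omega> x"
      "\<forall>n. \<forall>x\<in>{a<..<b}. DERIV (fh1 n \<omega>) x :> fh2 n \<omega> x"
      using interior_deriv dh1 dh2 by blast+
    from perturbed_local_minimizers[OF this elim] show ?case
      unfolding m_minima by (simp add: image_iff)
  qed
qed

end
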